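(* There exist constants $M_{t,j}\in[0,\infty)$ ($t\in\mathcal T$, $j=1,2,3$) and $M_J\in[0,\infty)$ ($J\in\mathcal N$), depending only on the multilinear program and not on $\hat v$, such that for every indicator vector $\hat v\in\{0,1\}^{\mathcal T}$ of a proper triple set and every optimal solution $(\lambda,\mu)$ of the linear program $\mathrm{D}(\hat v)$, we have $\lambda_{t,j}\le M_{t,j}$ for all $t\in\mathcal T$, $j=1,2,3$, and $\mu_J\le M_J$ for all $J\in\mathcal N$.
   Context: A multilinear program has data $n,m$, coefficients $\alpha_i\in\mathbb{R}$ and nonempty index sets $J_i\subseteq[n]$. Let $\mathcal N=\bigcup_i\{J:\emptyset\ne J\subseteq J_i\}$ and $\beta_J=\sum_{i:J_i=J}\alpha_i$. A triple is $t=(J,J',J'')$ with $J''\in\mathcal N$, $|J''|\ge2$, $J,J'$ nonempty, disjoint, $J\cup J'=J''$, listed with $J,J'$ in lexicographic order; $\mathsf{tail1}(t)=J$, $\mathsf{tail2}(t)=J'$, $\mathsf{head}(t)=J''$; $\mathcal T$ is the set of all triples. A proper triple set is a set $T\subseteq\mathcal T$ containing a subset $T'$ such that (1) every $J_i$ with $|J_i|>1$ is the head of some triple in $T'$, and (2) whenever a set $J$ with $|J|>1$ is the first or second element of a triple in $T'$, $J$ is the head of a different triple in $T'$; its indicator vector has $\hat v_t=1$ iff $t\in T$. $\mathrm{D}(\hat v)$: maximize $-\sum_{t\in\mathcal T}[(1-\hat v_t)(\lambda_{t,1}+\lambda_{t,2})+(2-\hat v_t)\lambda_{t,3}]-\sum_{J\in\mathcal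 N}\mu_J$ over $\lambda\ge0,\mu\ge0$ subject to, for every $J\in\mathcal N$, $\beta_J+\sum_{t:\mathsf{tail1}(t)=J}(-\lambda_{t,1}+\lambda_{t,3})+\sum_{t:\mathsf{tail2}(t)=J}(-\lambda_{t,2}+\lambda_{t,3})+\sum_{t:\mathsf{head}(t)=J}(\lambda_{t,1}+\lambda_{t,2}-\lambda_{t,3})+\mu_J\ge0$. *)

theory Defs
  imports Complex_Main
begin

type_synonym triple = "nat set \<times> nat set \<times> nat set"

text \<open>Data of a multilinear program: coefficients alpha i and index sets Js i, for i in {1..m},
  each Js i a nonempty subset of {1..n}.\<close>

definition NN :: "nat \<Rightarrow> (nat \<Rightarrow> nat set) \<Rightarrow> nat set set" where
  "NN m Js = {J. \<exists>i\<in>{1..m}. J \<noteq> {} \<and> J \<subseteq> Js i}"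

definition beta :: "nat \<Rightarrow> (nat \<Rightarrow> real) \<Rightarrow> (nat \<Rightarrow> nat set) \<Rightarrow> nat set \<Rightarrow> real" where
  "beta m alpha Js J = (\<Sum>i\<in>{i\<in>{1..m}. Js i = J}. alpha i)"

definition lex_less :: "nat set \<Rightarrow> nat set \<Rightarrow> bool" where
  "lex_less J J' \<longleftrightarrow> (sorted_list_of_set J, sorted_list_of_set J') \<in> lexord {(x, y). x < y}"

definition tail1 :: "triple \<Rightarrow> nat set" where "tail1 t = fst t"
definition tail2 :: "triple \<Rightarrow> nat set" where "tail2 t = fst (snd t)"
definition head :: "triple \<Rightarrow> nat set" where "head t = snd (snd t)"

definition Triples :: "nat \<Rightarrow> (nat \<Rightarrow> nat set) \<Rightarrow> triple set" where
  "Triples m Js = {(J, J', J''). J'' \<in> NN m Js \<and> card J'' \<ge> 2 \<and> J \<noteq> {} \<and> J' \<noteq> {}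
      \<and> J \<inter> J' = {} \<and> J \<union> J' = J'' \<and> lex_less J J'}"

definition proper_triple_set :: "nat \<Rightarrow> (nat \<Rightarrow> nat set) \<Rightarrow> triple set \<Rightarrow> bool" where
  "proper_triple_set m Js T \<longleftrightarrow> T \<subseteq> Triples m Js \<and>
     (\<exists>T' \<subseteq> T.
        (\<forall>i\<in>{1..m}. card (Js i) > 1 \<longrightarrow> (\<exists>t\<in>T'. head t = Js i)) \<and>
        (\<forall>t\<in>T'. \<forall>J\<in>{tail1 t, tail2 t}. card J > 1 \<longrightarrow> (\<exists>t'\<in>T'. t' \<noteq> t \<and> head t' = J)))"

definition indicator_vec :: "triple set \<Rightarrow> triple \<Rightarrow> real" where
  "indicator_vec T t = (if t \<in> T then 1 else 0)"

definition D_feasible :: "nat \<Rightarrow> (nat \<Rightarrow> real) \<Rightarrow> (nat \<Rightarrow> nat set)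
    \<Rightarrow> (triple \<Rightarrow> nat \<Rightarrow> real) \<Rightarrow> (nat set \<Rightarrow> real) \<Rightarrow> bool" where
  "D_feasible m alpha Js lam mu \<longleftrightarrow>
     (\<forall>t\<in>Triples m Js. \<forall>j\<in>{1,2,3}. lam t j \<ge> 0) \<and>
     (\<forall>J\<in>NN m Js. mu J \<ge> 0) \<and>
     (\<forall>J\<in>NN m Js.
        beta m alpha Js J
        + (\<Sum>t\<in>{t\<in>Triples m Js. tail1 t = J}. - lam t 1 + lam t 3)
        + (\<Sum>t\<in>{t\<in>Triples m Js. tail2 t = J}. - lam t 2 + lam t 3)
        + (\<Sum>t\<in>{t\<in>Triples m Js. head t = J}. lam t 1 + lam t 2 - lam t 3)
        + mu J \<ge> 0)"

definition D_objective :: "nat \<Rightarrow> (nat \<Rightarrow> nat set) \<Rightarrow> (triple \<Rightarrow> real)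
    \<Rightarrow> (triple \<Rightarrow> nat \<Rightarrow> real) \<Rightarrow> (nat set \<Rightarrow> real) \<Rightarrow> real" where
  "D_objective m Js v lam mu =
     - (\<Sum>t\<in>Triples m Js. (1 - v t) * (lam t 1 + lam t 2) + (2 - v t) * lam t 3)
     - (\<Sum>J\<in>NN m Js. mu J)"

definition D_optimal :: "nat \<Rightarrow> (nat \<Rightarrow> real) \<Rightarrow> (nat \<Rightarrow> nat set) \<Rightarrow> (triple \<Rightarrow> real)
    \<Rightarrow> (triple \<Rightarrow> nat \<Rightarrow> real) \<Rightarrow> (nat set \<Rightarrow> real) \<Rightarrow> bool" where
  "D_optimal m alpha Js v lam mu \<longleftrightarrow>
     D_feasible m alpha Js lam mu \<and>
     (\<forall>lam' mu'. D_feasible m alpha Js lam' mu' \<longrightarrow>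
        D_objective m Js v lam' mu' \<le> D_objective m Js v lam mu)"

end

theory Submission
  imports Defs
begin

text \<open>Comparing an optimal dual solution with the feasible point \<open>\<lambda> = 0\<close>,
  \<open>\<mu>\<^sub>J = max 0 (-\<beta>\<^sub>J)\<close> bounds its cost, which for \<open>0 \<le> v \<le> 1\<close> dominates
  \<open>\<Sum>\<lambda>\<^sub>t\<^sub>,\<^sub>3 + \<Sum>\<mu>\<^sub>J\<close>; so \<open>\<lambda>\<^sub>t\<^sub>,\<^sub>3\<close> and \<open>\<mu>\<^sub>J\<close> are at most \<open>B = \<Sum>max 0 (-\<beta>\<^sub>J)\<close>.
  The constraint at \<open>J\<close> then bounds the weight \<open>\<lambda>\<^sub>t\<^sub>,\<^sub>1\<close>, \<open>\<lambda>\<^sub>t\<^sub>,\<^sub>2\<close> of the triples having \<open>J\<close>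
  as a tail by \<open>\<beta>\<^sub>J + 3B\<close> plus the corresponding weight of the triples with head \<open>J\<close>,
  whose tails are strictly smaller than \<open>J\<close>. Induction on \<open>|J|\<close> gives a bound growing
  geometrically in \<open>|J|\<close>.\<close>

lemma NN_downward_closed: "J' \<in> NN m Js \<Longrightarrow> J \<noteq> {} \<Longrightarrow> J \<subseteq> J' \<Longrightarrow> J \<in> NN m Js"
  unfolding NN_def by blast

lemma Triples_D:
  assumes "t \<in> Triples m Js"
  shows "head t \<in> NN m Js" "tail1 t \<noteq> {}" "tail2 t \<noteq> {}"
    "tail1 t \<inter> tail2 t = {}" "tail1 t \<union> tail2 t = head t"
  using assms unfolding Triples_def tail1_def tail2_def head_def by auto

lemma D_feasible_nonneg:
  assumes "D_feasible m alpha Js lam mu"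
  shows "\<And>t j. t \<in> Triples m Js \<Longrightarrow> j \<in> {1, 2, 3} \<Longrightarrow> 0 \<le> lam t j"
    and "\<And>J. J \<in> NN m Js \<Longrightarrow> 0 \<le> mu J"
  using assms unfolding D_feasible_def by blast+

lemma feasible_zero_lam:
  "D_feasible m alpha Js (\<lambda>_ _. 0) (\<lambda>J. max 0 (- beta m alpha Js J))"
  unfolding D_feasible_def by auto

lemma D_objective_zero_lam:
  "D_objective m Js v (\<lambda>_ _. 0) (\<lambda>J. max 0 (- beta m alpha Js J))
     = - (\<Sum>J\<in>NN m Js. max 0 (- beta m alpha Js J))"
  unfolding D_objective_def by simp

lemma D_objective_le_neg_cost:
  assumes feas: "D_feasible m alpha Js lam mu"
    and v: "\<And>t. t \<in> Triples m Js \<Longrightarrow> 0 \<le> v t \<and> v t \<le> 1"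
  shows "D_objective m Js v lam mu \<le> - ((\<Sum>t\<in>Triples m Js. lam t 3) + (\<Sum>J\<in>NN m Js. mu J))"
proof -
  have "lam t 3 \<le> (1 - v t) * (lam t 1 + lam t 2) + (2 - v t) * lam t 3"
    if t: "t \<in> Triples m Js" for t
  proof -
    have "lam t 1 \<ge> 0" "lam t 2 \<ge> 0" "lam t 3 \<ge> 0"
      using D_feasible_nonneg(1)[OF feas t] by simp_all
    then have "0 \<le> (1 - v t) * (lam t 1 + lam t 2)" "0 \<le> (1 - v t) * lam t 3"
      using v[OF t] by simp_all
    moreover have "(2 - v t) * lam t 3 = lam t 3 + (1 - v t) * lam t 3"
      by (simp add: algebra_simps)
    ultimately show ?thesis
      by linarith
  qed
  then have "(\<Sum>t\<in>Triples m Js. lam t 3)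
      \<le> (\<Sum>t\<in>Triples m Js. (1 - v t) * (lam t 1 + lam t 2) + (2 - v t) * lam t 3)"
    by (rule sum_mono)
  then show ?thesis
    unfolding D_objective_def by linarith
qed

lemma D_optimal_cost_le:
  assumes opt: "D_optimal m alpha Js v lam mu"
    and v: "\<And>t. t \<in> Triples m Js \<Longrightarrow> 0 \<le> v t \<and> v t \<le> 1"
  shows "(\<Sum>t\<in>Triples m Js. lam t 3) + (\<Sum>J\<in>NN m Js. mu J)
    \<le> (\<Sum>J\<in>NN m Js. max 0 (- beta m alpha Js J))"
proof -
  have feas: "D_feasible m alpha Js lam mu"
    and max: "\<And>lam' mu'. D_feasible m alpha Js lam' mu' \<Longrightarrow>
      D_objective m Js v lam' mu' \<le> D_objective m Js v lam mu"
    using opt unfolding D_optimal_def by auto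
  have "- (\<Sum>J\<in>NN m Js. max 0 (- beta m alpha Js J)) \<le> D_objective m Js v lam mu"
    using max[OF feasible_zero_lam] by (simp only: D_objective_zero_lam)
  also have "\<dots> \<le> - ((\<Sum>t\<in>Triples m Js. lam t 3) + (\<Sum>J\<in>NN m Js. mu J))"
    using feas v by (rule D_objective_le_neg_cost)
  finally show ?thesis
    by linarith
qed

locale multilinear_program =
  fixes n m :: nat and alpha :: "nat \<Rightarrow> real" and Js :: "nat \<Rightarrow> nat set"
  assumes index_sets: "\<And>i. i \<in> {1..m} \<Longrightarrow> Js i \<noteq> {} \<and> Js i \<subseteq> {1..n}"
begin

abbreviation "\<N> \<equiv> NN m Js"
abbreviation "\<T> \<equiv> Triples m Js"
abbreviation "\<beta> \<equiv> beta m alpha Js"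

lemma NN_subset_Pow: "\<N> \<subseteq> Pow {1..n}"
  using index_sets unfolding NN_def by blast

lemma finite_NN: "finite \<N>"
  using NN_subset_Pow by (rule finite_subset) simp

lemma finite_NN_member: "J \<in> \<N> \<Longrightarrow> finite J"
  using NN_subset_Pow by (meson PowD finite_atLeastAtMost finite_subset subsetD)

lemma Triples_members_NN:
  assumes t: "t \<in> \<T>"
  shows "tail1 t \<in> \<N>" "tail2 t \<in> \<N>" "head t \<in> \<N>"
proof -
  have "tail1 t \<subseteq> head t" "tail2 t \<subseteq> head t"
    using Triples_D(5)[OF t] by auto
  then show "tail1 t \<in> \<N>" "tail2 t \<in> \<N>" "head t \<in> \<N>"
    using Triples_D[OF t] NN_downward_closed by blast+
qed

lemma finite_Triples: "finite \<T>"
proof (rule finite_subset)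
  show "\<T> \<subseteq> \<N> \<times> \<N> \<times> \<N>"
    using Triples_members_NN unfolding tail1_def tail2_def head_def
    by (auto simp: mem_Times_iff)
  show "finite (\<N> \<times> \<N> \<times> \<N>)"
    using finite_NN by simp
qed

lemma card_tails_less_head:
  assumes t: "t \<in> \<T>"
  shows "card (tail1 t) < card (head t)" "card (tail2 t) < card (head t)"
proof -
  have "finite (head t)"
    using Triples_D(1)[OF t] by (rule finite_NN_member)
  moreover have "tail1 t \<subset> head t" "tail2 t \<subset> head t"
    using Triples_D[OF t] by auto
  ultimately show "card (tail1 t) < card (head t)" "card (tail2 t) < card (head t)"
    by (auto intro: psubset_card_mono)
qed

definition outflow :: "(triple \<Rightarrow> nat \<Rightarrow> real) \<Rightarrow> nat set \<Rightarrow> real" where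
  "outflow lam J = (\<Sum>t\<in>{t\<in>\<T>. tail1 t = J}. lam t 1) + (\<Sum>t\<in>{t\<in>\<T>. tail2 t = J}. lam t 2)"

lemma lam_le_outflow:
  assumes feas: "D_feasible m alpha Js lam mu" and t: "t \<in> \<T>"
  shows "lam t 1 \<le> outflow lam (tail1 t)" "lam t 2 \<le> outflow lam (tail2 t)"
proof -
  note lam0 = D_feasible_nonneg(1)[OF feas]
  have nonneg: "0 \<le> (\<Sum>s\<in>{s\<in>\<T>. tail1 s = J}. lam s 1)"
    "0 \<le> (\<Sum>s\<in>{s\<in>\<T>. tail2 s = J}. lam s 2)" for J
    using lam0 by (auto intro: sum_nonneg)
  have "lam t 1 \<le> (\<Sum>s\<in>{s\<in>\<T>. tail1 s = tail1 t}. lam s 1)"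
    using t finite_Triples lam0 by (intro member_le_sum) auto
  then show "lam t 1 \<le> outflow lam (tail1 t)"
    unfolding outflow_def using nonneg(2)[of "tail1 t"] by linarith
  have "lam t 2 \<le> (\<Sum>s\<in>{s\<in>\<T>. tail2 s = tail2 t}. lam s 2)"
    using t finite_Triples lam0 by (intro member_le_sum) auto
  then show "lam t 2 \<le> outflow lam (tail2 t)"
    unfolding outflow_def using nonneg(1)[of "tail2 t"] by linarith
qed

lemma outflow_le_inflow:
  assumes feas: "D_feasible m alpha Js lam mu" and J: "J \<in> \<N>"
  shows "outflow lam J \<le> \<beta> J + 2 * (\<Sum>t\<in>\<T>. lam t 3) + mu J
    + (\<Sum>t\<in>{t\<in>\<T>. head t = J}. lam t 1 + lam t 2)"
proof -
  define X1 X2 XH where "X1 = {t\<in>\<T>. tail1 t = J}" and "X2 = {t\<in>\<T>. tail2 t = J}"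
    and "XH = {t\<in>\<T>. head t = J}"
  note lam0 = D_feasible_nonneg(1)[OF feas]
  have constraint: "0 \<le> \<beta> J + (\<Sum>t\<in>X1. - lam t 1 + lam t 3) + (\<Sum>t\<in>X2. - lam t 2 + lam t 3)
      + (\<Sum>t\<in>XH. lam t 1 + lam t 2 - lam t 3) + mu J"
    using feas J unfolding D_feasible_def X1_def X2_def XH_def by blast
  have "(\<Sum>t\<in>X1. lam t 3) \<le> (\<Sum>t\<in>\<T>. lam t 3)" "(\<Sum>t\<in>X2. lam t 3) \<le> (\<Sum>t\<in>\<T>. lam t 3)"
    using finite_Triples lam0 unfolding X1_def X2_def by (auto intro: sum_mono2)
  moreover have "(\<Sum>t\<in>XH. lam t 1 + lam t 2 - lam t 3) \<le> (\<Sum>t\<in>XH. lam t 1 + lam t 2)"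
    using lam0 unfolding XH_def by (intro sum_mono) auto
  moreover have "(\<Sum>t\<in>X1. - lam t 1 + lam t 3) = (\<Sum>t\<in>X1. lam t 3) - (\<Sum>t\<in>X1. lam t 1)"
    and "(\<Sum>t\<in>X2. - lam t 2 + lam t 3) = (\<Sum>t\<in>X2. lam t 3) - (\<Sum>t\<in>X2. lam t 2)"
    by (simp_all add: sum_subtractf)
  ultimately show ?thesis
    using constraint unfolding outflow_def X1_def [symmetric] X2_def [symmetric] XH_def [symmetric]
    by linarith
qed

text \<open>The ratio \<open>1 + 2|\<T>|\<close> absorbs the two tails of each of the at most \<open>|\<T>|\<close>
  triples with head \<open>J\<close>, whose outflow is bounded by induction.\<close>

lemma outflow_bound:
  assumes feas: "D_feasible m alpha Js lam mu"
    and lam3: "(\<Sum>t\<in>\<T>. lam t 3) \<le> B" and mu: "\<And>J. J \<in> \<N> \<Longrightarrow> mu J \<le> B"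
    and J: "J \<in> \<N>"
  shows "outflow lam J \<le> ((\<Sum>J\<in>\<N>. \<bar>\<beta> J\<bar>) + 3 * B) * (1 + 2 * real (card \<T>)) ^ card J"
  using J
proof (induction "card J" arbitrary: J rule: less_induct)
  case less
  define A Q k where "A = (\<Sum>J\<in>\<N>. \<bar>\<beta> J\<bar>) + 3 * B" and "Q = 1 + 2 * real (card \<T>)"
    and "k = card J"
  have "0 \<le> (\<Sum>t\<in>\<T>. lam t 3)" "0 \<le> (\<Sum>J\<in>\<N>. \<bar>\<beta> J\<bar>)"
    using D_feasible_nonneg(1)[OF feas] by (auto intro: sum_nonneg)
  with lam3 have A_nonneg: "0 \<le> A"
    unfolding A_def by linarith
  have Q_ge_1: "1 \<le> Q"
    unfolding Q_def by simp
  have "J \<noteq> {}" "finite J"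
    using less.prems finite_NN_member unfolding NN_def by auto
  then have k_pos: "0 < k"
    unfolding k_def by (simp add: card_gt_0_iff)
  have IH: "outflow lam J' \<le> A * Q ^ (k - 1)" if "J' \<in> \<N>" "card J' < k" for J'
  proof -
    have "outflow lam J' \<le> A * Q ^ card J'"
      using less.hyps that unfolding A_def Q_def k_def by blast
    also have "\<dots> \<le> A * Q ^ (k - 1)"
      using that(2) A_nonneg Q_ge_1 by (intro mult_left_mono power_increasing) auto
    finally show ?thesis .
  qed
  have head_J: "lam s 1 + lam s 2 \<le> 2 * (A * Q ^ (k - 1))" if s: "s \<in> \<T>" "head s = J" for s
  proof -
    have "lam s 1 \<le> outflow lam (tail1 s)" "lam s 2 \<le> outflow lam (tail2 s)"
      using feas s(1) by (rule lam_le_outflow)+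
    moreover have "outflow lam (tail1 s) \<le> A * Q ^ (k - 1)" "outflow lam (tail2 s) \<le> A * Q ^ (k - 1)"
      using IH Triples_members_NN[OF s(1)] card_tails_less_head[OF s(1)] s(2)
      unfolding k_def by auto
    ultimately show ?thesis
      by linarith
  qed
  have "(\<Sum>s\<in>{s\<in>\<T>. head s = J}. lam s 1 + lam s 2)
      \<le> real (card {s\<in>\<T>. head s = J}) * (2 * (A * Q ^ (k - 1)))"
    using head_J by (intro sum_bounded_above) auto
  also have "\<dots> \<le> real (card \<T>) * (2 * (A * Q ^ (k - 1)))"
    using A_nonneg Q_ge_1 finite_Triples by (intro mult_right_mono) (auto intro: card_mono)
  finally have inflow: "(\<Sum>s\<in>{s\<in>\<T>. head s = J}. lam s 1 + lam s 2)
      \<le> real (card \<T>) * (2 * (A * Q ^ (k - 1)))" .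
  have "\<beta> J \<le> \<bar>\<beta> J\<bar>"
    by simp
  also have "\<dots> \<le> (\<Sum>J\<in>\<N>. \<bar>\<beta> J\<bar>)"
    using less.prems finite_NN by (intro member_le_sum) auto
  finally have "\<beta> J \<le> (\<Sum>J\<in>\<N>. \<bar>\<beta> J\<bar>)" .
  then have "outflow lam J \<le> A + real (card \<T>) * (2 * (A * Q ^ (k - 1)))"
    using outflow_le_inflow[OF feas less.prems] inflow lam3 mu[OF less.prems]
    unfolding A_def by linarith
  also have "\<dots> \<le> A * Q ^ (k - 1) + real (card \<T>) * (2 * (A * Q ^ (k - 1)))"
    using A_nonneg Q_ge_1 by (simp add: mult_le_cancel_left1 one_le_power)
  also have "\<dots> = A * Q ^ k"
    using k_pos unfolding Q_def by (cases k) (simp_all add: algebra_simps)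
  finally show ?case
    unfolding A_def Q_def k_def .
qed

lemma optimal_dual_bounds:
  assumes opt: "D_optimal m alpha Js v lam mu"
    and v: "\<And>t. t \<in> \<T> \<Longrightarrow> 0 \<le> v t \<and> v t \<le> 1"
  defines "B \<equiv> \<Sum>J\<in>\<N>. max 0 (- \<beta> J)"
  shows "\<And>J. J \<in> \<N> \<Longrightarrow> mu J \<le> B"
    and "\<And>t. t \<in> \<T> \<Longrightarrow> lam t 3 \<le> B"
    and "\<And>t. t \<in> \<T> \<Longrightarrow>
      lam t 1 \<le> ((\<Sum>J\<in>\<N>. \<bar>\<beta> J\<bar>) + 3 * B) * (1 + 2 * real (card \<T>)) ^ card (tail1 t)"
    and "\<And>t. t \<in> \<T> \<Longrightarrow>
      lam t 2 \<le> ((\<Sum>J\<in>\<N>. \<bar>\<beta> J\<bar>) + 3 * B) * (1 + 2 * real (card \<T>)) ^ card (tail2 t)"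
proof -
  have feas: "D_feasible m alpha Js lam mu"
    using opt unfolding D_optimal_def by blast
  note lam0 = D_feasible_nonneg(1)[OF feas] and mu0 = D_feasible_nonneg(2)[OF feas]
  have cost: "(\<Sum>t\<in>\<T>. lam t 3) + (\<Sum>J\<in>\<N>. mu J) \<le> B"
    unfolding B_def using opt v by (rule D_optimal_cost_le)
  have "0 \<le> (\<Sum>t\<in>\<T>. lam t 3)" "0 \<le> (\<Sum>J\<in>\<N>. mu J)"
    using lam0 mu0 by (auto intro: sum_nonneg)
  with cost have lam3: "(\<Sum>t\<in>\<T>. lam t 3) \<le> B" and mu_sum: "(\<Sum>J\<in>\<N>. mu J) \<le> B"
    by linarith+
  show mu: "mu J \<le> B" if "J \<in> \<N>" for J
    using member_le_sum[of J \<N> mu] that mu0 finite_NN mu_sum by auto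
  show "lam t 3 \<le> B" if "t \<in> \<T>" for t
    using member_le_sum[of t \<T> "\<lambda>t. lam t 3"] that lam0 finite_Triples lam3 by auto
  show "lam t 1 \<le> ((\<Sum>J\<in>\<N>. \<bar>\<beta> J\<bar>) + 3 * B) * (1 + 2 * real (card \<T>)) ^ card (tail1 t)"
    if t: "t \<in> \<T>" for t
    using lam_le_outflow(1)[OF feas t] outflow_bound[OF feas lam3 mu Triples_members_NN(1)[OF t]]
    by linarith
  show "lam t 2 \<le> ((\<Sum>J\<in>\<N>. \<bar>\<beta> J\<bar>) + 3 * B) * (1 + 2 * real (card \<T>)) ^ card (tail2 t)"
    if t: "t \<in> \<T>" for t
    using lam_le_outflow(2)[OF feas t] outflow_bound[OF feas lam3 mu Triples_members_NN(2)[OF t]]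
    by linarith
qed

end

theorem proposition3:
  fixes n m :: nat and alpha :: "nat \<Rightarrow> real" and Js :: "nat \<Rightarrow> nat set"
  assumes "\<And>i. i \<in> {1..m} \<Longrightarrow> Js i \<noteq> {} \<and> Js i \<subseteq> {1..n}"
  shows "\<exists>(Mt :: triple \<Rightarrow> nat \<Rightarrow> real) (MN :: nat set \<Rightarrow> real).
    (\<forall>t\<in>Triples m Js. \<forall>j\<in>{1,2,3}. Mt t j \<ge> 0) \<and> (\<forall>J\<in>NN m Js. MN J \<ge> 0) \<and>
    (\<forall>T lam mu. proper_triple_set m Js T \<longrightarrow>
        D_optimal m alpha Js (indicator_vec T) lam mu \<longrightarrow>
        (\<forall>t\<in>Triples m Js. \<forall>j\<in>{1,2,3}. lam t j \<le> Mt t j) \<and>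
        (\<forall>J\<in>NN m Js. mu J \<le> MN J))"
proof -
  interpret multilinear_program n m alpha Js
    using assms by unfold_locales
  define B where "B = (\<Sum>J\<in>\<N>. max 0 (- \<beta> J))"
  define A where "A = (\<Sum>J\<in>\<N>. \<bar>\<beta> J\<bar>) + 3 * B"
  define Q where "Q = 1 + 2 * real (card \<T>)"
  define Mt where "Mt t j = (if j = 1 then A * Q ^ card (tail1 t)
    else if j = 2 then A * Q ^ card (tail2 t) else B)" for t :: triple and j :: nat
  have "0 \<le> B"
    unfolding B_def by (simp add: sum_nonneg)
  moreover from this have "0 \<le> A"
    unfolding A_def by (simp add: sum_nonneg)
  ultimately have "\<forall>t\<in>\<T>. \<forall>j\<in>{1,2,3}. Mt t j \<ge> 0"
    unfolding Mt_def Q_def by simp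
  moreover have "(\<forall>t\<in>\<T>. \<forall>j\<in>{1,2,3}. lam t j \<le> Mt t j) \<and> (\<forall>J\<in>\<N>. mu J \<le> B)"
    if opt: "D_optimal m alpha Js (indicator_vec T) lam mu" for T lam mu
  proof -
    have "0 \<le> indicator_vec T t \<and> indicator_vec T t \<le> 1" for t
      by (simp add: indicator_vec_def)
    from optimal_dual_bounds[OF opt this, folded B_def, folded A_def Q_def] show ?thesis
      unfolding Mt_def by auto
  qed
  ultimately show ?thesis
    using \<open>0 \<le> B\<close> by (intro exI[of _ Mt] exI[of _ "\<lambda>_. B"]) blast
qed

end
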